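(* There are universal constants $C,c>0$ such that the following holds. Let $p\in(0,1/2]$, let $y=(y_1,\dots,y_n)\in\mathbb{R}^n$, and let $L>0$, $\lambda\in\mathbb{R}$ be such that, for independent Bernoulli($p$) random variables $b_1,\dots,b_n$, $\mathbb{P}\{|\sum_{i=1}^nb_iy_i-\lambda|\leq t\}\leq Lt$ for all $t\geq\sqrt n$. Then there exists $y'=(y'_1,\dots,y'_n)\in\mathbb{Z}^n$ such that: (i) $\|y-y'\|_\infty\leq1$; (ii) $\mathbb{P}\{|\sum_{i=1}^nb_iy'_i-\lambda|\leq t\}\leq C\,Lt$ for all $t\geq\sqrt n$; (iii) $\mathcal L(\sum_{i=1}^nb_iy'_i,\sqrt n)\geq c\,\mathcal L(\sum_{i=1}^nb_iy_i,\sqrt n)$; (iv) $|\sum_{i=1}^ny_i-\sum_{i=1}^ny'_i|\leq C\sqrt n$.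
   Context: A Bernoulli($p$) random variable takes value $1$ with probability $p$ and $0$ with probability $1-p$. The Lévy concentration function is $\mathcal L(\xi,t)=\sup_{\lambda\in\mathbb{R}}\mathbb{P}\{|\xi-\lambda|\leq t\}$. *)

theory Defs
  imports "HOL-Probability.Probability"
begin

definition bern_vec :: "nat \<Rightarrow> real \<Rightarrow> (nat \<Rightarrow> bool) pmf" where
  "bern_vec n p = Pi_pmf {..<n} False (\<lambda>_. bernoulli_pmf p)"

definition bsum :: "nat \<Rightarrow> real \<Rightarrow> (nat \<Rightarrow> real) \<Rightarrow> real pmf" where
  "bsum n p y = map_pmf (\<lambda>b. \<Sum>i<n. of_bool (b i) * y i) (bern_vec n p)"

definition levy_conc :: "real pmf \<Rightarrow> real \<Rightarrow> real" where
  "levy_conc M t = (SUP lam. measure_pmf.prob M {x. \<bar>x - lam\<bar> \<le> t})"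

end

theory Submission
  imports Defs
begin

text \<open>
  Round every \<open>y\<^sub>i\<close> up with probability \<open>frac y\<^sub>i\<close> and down otherwise, independently of the
  \<open>b\<^sub>i\<close>. For fixed \<open>b\<close> the error \<open>D = \<Sum> b\<^sub>i (y'\<^sub>i - y\<^sub>i)\<close> is a sum of independent centred
  variables bounded by 1, so \<open>E D\<^sup>2 \<le> n\<close> and Chebyshev controls \<open>|D|\<close> on the scale \<open>\<surd>n\<close>.

  Write \<open>S = \<Sum> b\<^sub>i y\<^sub>i\<close>. If \<open>|S + D - \<lambda>| \<le> t\<close> then \<open>|S - \<lambda>| \<le> 2t\<close>, or \<open>|D|\<close> exceeds both \<open>\<surd>n\<close> and
  \<open>|S - \<lambda>|/2\<close>. Averaged over the rounding, the second event has probability at most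
  \<open>E\<^sub>b (\<surd>n / max \<surd>n (|S - \<lambda>|/2))\<^sup>2\<close>, and splitting \<open>|S - \<lambda>|\<close> into dyadic ranges bounds this
  by \<open>16 L \<surd>n\<close> through the small-ball hypothesis; this gives (ii). For (iii), take a ball of
  radius \<open>\<surd>n\<close> carrying more than half of the concentration function: for most \<open>b\<close> in it
  \<open>|D| < 2\<surd>n\<close>, so the rounded sum stays in the concentric ball of radius \<open>3\<surd>n\<close>, which is
  covered by three balls of radius \<open>\<surd>n\<close>. For (iv), \<open>\<Sum> (y'\<^sub>i - y\<^sub>i)\<close> again has second moment at
  most \<open>n\<close>. By Markov's inequality the three properties fail with probabilities at most
  \<open>1/4\<close>, \<open>1/2\<close> and \<open>1/16\<close>, so some rounding has all of them.
\<close>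

lemma finite_set_pmf_Pi_pmf:
  fixes q :: "'a \<Rightarrow> 'b::finite pmf"
  assumes "finite A"
  shows "finite (set_pmf (Pi_pmf A d q))"
proof (rule finite_subset[OF set_Pi_pmf_subset[OF assms]])
  have "{f. \<forall>x. x \<notin> A \<longrightarrow> f x = d} = PiE_dflt A d (\<lambda>_. UNIV)"
    by (auto simp: PiE_dflt_def)
  then show "finite {f. \<forall>x. x \<notin> A \<longrightarrow> f x = (d::'b)}"
    using assms by auto
qed

lemma expectation_pair_pmf:
  fixes h :: "'a \<times> 'b \<Rightarrow> real"
  assumes "finite (set_pmf M)" "finite (set_pmf N)"
  shows "measure_pmf.expectation (pair_pmf M N) h =
         measure_pmf.expectation M (\<lambda>a. measure_pmf.expectation N (\<lambda>b. h (a, b)))"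
proof -
  have "measure_pmf.expectation (pair_pmf M N) h =
        (\<Sum>z\<in>set_pmf M \<times> set_pmf N. h z * (pmf M (fst z) * pmf N (snd z)))"
    using assms by (subst integral_measure_pmf_real[of "set_pmf M \<times> set_pmf N"])
      (auto simp: pmf_pair intro!: sum.cong)
  also have "\<dots> = (\<Sum>a\<in>set_pmf M. \<Sum>b\<in>set_pmf N. h (a, b) * pmf N b * pmf M a)"
    by (simp add: sum.cartesian_product case_prod_beta mult_ac)
  also have "\<dots> = measure_pmf.expectation M (\<lambda>a. measure_pmf.expectation N (\<lambda>b. h (a, b)))"
    using assms by (simp add: integral_measure_pmf_real sum_distrib_right)
  finally show ?thesis .
qed

lemma expectation_swap:
  fixes f :: "'a \<Rightarrow> 'b \<Rightarrow> real"
  assumes "finite (set_pmf M)" "finite (set_pmf N)"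
  shows "measure_pmf.expectation M (\<lambda>a. measure_pmf.expectation N (f a)) =
         measure_pmf.expectation N (\<lambda>b. measure_pmf.expectation M (\<lambda>a. f a b))"
proof -
  have "measure_pmf.expectation M (\<lambda>a. measure_pmf.expectation N (f a)) =
        measure_pmf.expectation (pair_pmf M N) (\<lambda>z. f (fst z) (snd z))"
    using assms by (simp add: expectation_pair_pmf)
  also have "\<dots> = measure_pmf.expectation (pair_pmf N M) (\<lambda>z. f (snd z) (fst z))"
    by (subst pair_commute_pmf) (simp add: case_prod_beta)
  also have "\<dots> = measure_pmf.expectation N (\<lambda>b. measure_pmf.expectation M (\<lambda>a. f a b))"
    using assms by (simp add: expectation_pair_pmf)
  finally show ?thesis .
qed

lemma prob_eq_expectation_of_bool:
  "measure_pmf.prob M {x. P x} = measure_pmf.expectation M (\<lambda>x. of_bool (P x))"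
proof -
  have "measure_pmf.prob M {x. P x} = measure_pmf.expectation M (indicator {x. P x})"
    by simp
  then show ?thesis
    unfolding indicator_def by simp
qed

lemma Markov_inequality_pmf:
  fixes Z :: "'a \<Rightarrow> real"
  assumes "finite (set_pmf M)" "\<And>x. 0 \<le> Z x" "0 < c"
  shows "measure_pmf.prob M {x. c \<le> Z x} \<le> measure_pmf.expectation M Z / c"
  using integral_Markov_inequality_measure[of "measure_pmf M" Z "{}" c] assms
  by (simp add: integrable_measure_pmf_finite)

lemma prob_Un_le:
  "measure_pmf.prob M (A \<union> B) \<le> measure_pmf.prob M A + measure_pmf.prob M B"
  by (rule measure_subadditive) auto

lemma ex_not_in_of_prob_less_1:
  assumes "measure_pmf.prob M A < 1"
  shows "\<exists>x. x \<notin> A"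
proof (rule ccontr)
  assume "\<nexists>x. x \<notin> A"
  then have "A = UNIV" by auto
  with assms show False by simp
qed

lemma second_moment_sum_Pi_pmf:
  fixes g :: "'a \<Rightarrow> 'b::finite \<Rightarrow> real"
  assumes "finite A"
    and mean_zero: "\<And>i. i \<in> A \<Longrightarrow> measure_pmf.expectation (q i) (g i) = 0"
    and bounded: "\<And>i x. i \<in> A \<Longrightarrow> \<bar>g i x\<bar> \<le> 1"
  shows "measure_pmf.expectation (Pi_pmf A d q) (\<lambda>r. \<Sum>i\<in>A. g i (r i)) = 0 \<and>
         measure_pmf.expectation (Pi_pmf A d q) (\<lambda>r. (\<Sum>i\<in>A. g i (r i))^2) \<le> card A"
  using assms(1) mean_zero bounded
proof (induction A rule: finite_induct)
  case empty
  then show ?case by simp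
next
  case (insert x A)
  let ?T = "\<lambda>f. \<Sum>i\<in>A. g i (f i)"
  let ?P = "Pi_pmf A d q"
  have IH: "measure_pmf.expectation ?P ?T = 0"
    "measure_pmf.expectation ?P (\<lambda>f. (?T f)^2) \<le> card A"
    using insert by auto
  have fin: "finite (set_pmf ?P)" "finite (set_pmf (q x))"
    using insert.hyps by (simp_all add: finite_set_pmf_Pi_pmf)
  have split: "measure_pmf.expectation (Pi_pmf (insert x A) d q) (\<lambda>r. F (\<Sum>i\<in>insert x A. g i (r i)))
      = measure_pmf.expectation (q x) (\<lambda>v. measure_pmf.expectation ?P (\<lambda>f. F (g x v + ?T f)))"
    for F :: "real \<Rightarrow> real"
  proof -
    have "(\<Sum>i\<in>insert x A. g i ((f(x := v)) i)) = g x v + ?T f" for f v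
      using insert.hyps by (auto intro!: sum.cong)
    then have "measure_pmf.expectation (Pi_pmf (insert x A) d q) (\<lambda>r. F (\<Sum>i\<in>insert x A. g i (r i)))
        = measure_pmf.expectation (pair_pmf (q x) ?P) (\<lambda>z. F (g x (fst z) + ?T (snd z)))"
      using insert.hyps by (simp add: Pi_pmf_insert case_prod_beta del: fun_upd_apply)
    also have "\<dots> = measure_pmf.expectation (q x) (\<lambda>v. measure_pmf.expectation ?P (\<lambda>f. F (g x v + ?T f)))"
      using fin by (simp add: expectation_pair_pmf)
    finally show ?thesis .
  qed
  have sq: "(g x v)^2 \<le> 1" for v
    using insert.prems(2)[of x v] by (simp add: abs_square_le_1)
  have "measure_pmf.expectation (Pi_pmf (insert x A) d q) (\<lambda>r. \<Sum>i\<in>insert x A. g i (r i)) = 0"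
    using split[of id] IH insert.prems(1)[of x] fin by (simp add: integrable_measure_pmf_finite)
  moreover have "measure_pmf.expectation (Pi_pmf (insert x A) d q) (\<lambda>r. (\<Sum>i\<in>insert x A. g i (r i))^2)
      = measure_pmf.expectation (q x) (\<lambda>v. (g x v)^2 + measure_pmf.expectation ?P (\<lambda>f. (?T f)^2))"
    \<comment> \<open>the cross term vanishes because \<open>?T\<close> has mean zero\<close>
    using split[of "\<lambda>u. u^2"] IH fin
    by (simp add: power2_sum integrable_measure_pmf_finite)
  moreover have "\<dots> \<le> measure_pmf.expectation (q x) (\<lambda>v. 1 + card A)"
    using add_mono[OF sq IH(2)] fin by (intro integral_mono) (auto intro: integrable_measure_pmf_finite)
  ultimately show ?case
    using insert.hyps by simp
qed

lemma dyadic_bound_inverse_square: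
  fixes s X :: real
  assumes "0 < s" "X \<le> 2^(N+1) * s"
  shows "(s / max s (X/2))^2 \<le> (\<Sum>k\<le>N. 4 / 4^k * of_bool (X \<le> 2^(k+1) * s))"
  using assms(2)
proof (induction N)
  case 0
  then show ?case using assms(1) by (simp add: power_le_one)
next
  case (Suc N)
  show ?case
  proof (cases "X \<le> 2^(N+1) * s")
    case True
    then have "(s / max s (X/2))^2 \<le> (\<Sum>k\<le>N. 4 / 4^k * of_bool (X \<le> 2^(k+1) * s))"
      using Suc.IH by blast
    then show ?thesis
      unfolding sum.atMost_Suc by (rule add_increasing2[rotated]) simp
  next
    case False
    then have X: "2^N * s < X/2" by simp
    moreover have "s \<le> 2^N * s" using assms(1) by simp
    ultimately have "(s / max s (X/2))^2 \<le> (s / (2^N * s))^2"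
      using assms(1) by (intro power_mono divide_left_mono) auto
    also have "\<dots> = 4 / 4^Suc N"
    proof -
      have "(2::real)^N * 2^N = 4^N" by (simp flip: power_mult_distrib)
      then show ?thesis using assms(1) by (simp add: power2_eq_square)
    qed
    finally have "(s / max s (X/2))^2 \<le> 4 / 4^Suc N * of_bool (X \<le> 2^(Suc N+1) * s)"
      using Suc.prems by simp
    then show ?thesis
      unfolding sum.atMost_Suc by (rule add_increasing[rotated]) (simp add: sum_nonneg)
  qed
qed

lemma expectation_inverse_square_le:
  fixes X :: "'a \<Rightarrow> real"
  assumes fin: "finite (set_pmf M)" and s: "0 < s"
    and small_ball: "\<And>t. s \<le> t \<Longrightarrow> measure_pmf.prob M {x. X x \<le> t} \<le> L * t"
  shows "measure_pmf.expectation M (\<lambda>x. (s / max s (X x / 2))^2) \<le> 16 * L * s"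
proof -
  have "0 \<le> L * s" using small_ball[of s] measure_nonneg[of M] by (meson order.trans order_refl)
  then have L: "0 \<le> L" using s by (simp add: zero_le_mult_iff)
  obtain N where N: "Max (X ` set_pmf M) / s < 2^N"
    using real_arch_pow[of 2] by auto
  have "X x \<le> 2^(N+1) * s" if "x \<in> set_pmf M" for x
  proof -
    have "X x \<le> Max (X ` set_pmf M)" using fin that by simp
    also have "\<dots> \<le> 2^N * s" using N s by (simp add: field_simps)
    also have "\<dots> \<le> 2^(N+1) * s" using s by simp
    finally show ?thesis .
  qed
  then have "measure_pmf.expectation M (\<lambda>x. (s / max s (X x / 2))^2)
      \<le> measure_pmf.expectation M (\<lambda>x. \<Sum>k\<le>N. 4 / 4^k * of_bool (X x \<le> 2^(k+1) * s))"
    using s fin by (intro integral_mono_AE AE_pmfI dyadic_bound_inverse_square)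
      (auto intro: integrable_measure_pmf_finite)
  also have "\<dots> = (\<Sum>k\<le>N. 4 / 4^k * measure_pmf.prob M {x. X x \<le> 2^(k+1) * s})"
    using fin by (simp add: integrable_measure_pmf_finite prob_eq_expectation_of_bool)
  also have "\<dots> \<le> (\<Sum>k\<le>N. 4 / 4^k * (L * (2^(k+1) * s)))"
    using s by (intro sum_mono mult_left_mono small_ball) (auto intro: one_le_power simp flip: power_Suc)
  also have "\<dots> = 8 * L * s * (\<Sum>k\<le>N. (1/2)^k)"
  proof -
    have "4 / 4^k * (L * (2^(k+1) * s)) = 8 * L * s * (1/2)^k" for k :: nat
    proof -
      have "(4::real)^k = 2^k * 2^k" by (simp flip: power_mult_distrib)
      then show ?thesis by (simp add: power_divide)
    qed
    then show ?thesis by (simp add: sum_distrib_left)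
  qed
  also have "\<dots> \<le> 8 * L * s * 2"
  proof -
    have "(\<Sum>k\<le>N. (1/2::real)^k) = 2 - (1/2)^N"
      by (induction N) (auto simp: field_simps)
    then show ?thesis using L s by (intro mult_left_mono) auto
  qed
  finally show ?thesis by simp
qed

lemma prob_ball_le_levy_conc:
  "measure_pmf.prob M {x. \<bar>x - mu\<bar> \<le> t} \<le> levy_conc M t"
  unfolding levy_conc_def by (rule cSUP_upper) (auto intro!: bdd_aboveI[of _ 1])

lemma levy_conc_pos:
  assumes "0 \<le> t"
  shows "0 < levy_conc M t"
proof -
  obtain x where "x \<in> set_pmf M" using set_pmf_not_empty[of M] by blast
  then have "0 < measure_pmf.prob M {z. \<bar>z - x\<bar> \<le> t}"
    using assms by (intro measure_pmf_posI) auto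
  also have "\<dots> \<le> levy_conc M t" by (rule prob_ball_le_levy_conc)
  finally show ?thesis .
qed

lemma ex_ball_prob_gt_half_levy_conc:
  assumes "0 \<le> t"
  obtains mu where "levy_conc M t / 2 < measure_pmf.prob M {x. \<bar>x - mu\<bar> \<le> t}"
proof -
  have "levy_conc M t / 2 < levy_conc M t" using levy_conc_pos[OF assms] by simp
  then show ?thesis using that unfolding levy_conc_def
    by (subst (asm) less_cSUP_iff) (auto intro!: bdd_aboveI[of _ 1])
qed

lemma prob_ball_triple_le_levy_conc:
  "measure_pmf.prob M {x. \<bar>x - mu\<bar> \<le> 3 * t} \<le> 3 * levy_conc M t"
proof -
  let ?B = "\<lambda>c. {x. \<bar>x - c\<bar> \<le> t}"
  have "measure_pmf.prob M {x. \<bar>x - mu\<bar> \<le> 3 * t} \<le> measure_pmf.prob M (?B (mu - 2*t) \<union> ?B mu \<union> ?B (mu + 2*t))"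
    by (intro measure_pmf.finite_measure_mono) auto
  also have "\<dots> \<le> measure_pmf.prob M (?B (mu - 2*t)) + measure_pmf.prob M (?B mu) + measure_pmf.prob M (?B (mu + 2*t))"
    using prob_Un_le[of M "?B (mu - 2*t) \<union> ?B mu" "?B (mu + 2*t)"]
      prob_Un_le[of M "?B (mu - 2*t)" "?B mu"] by linarith
  also have "\<dots> \<le> 3 * levy_conc M t"
    using prob_ball_le_levy_conc[of M "mu - 2*t" t] prob_ball_le_levy_conc[of M mu t]
      prob_ball_le_levy_conc[of M "mu + 2*t" t] by linarith
  finally show ?thesis .
qed

definition wsum :: "nat \<Rightarrow> (nat \<Rightarrow> real) \<Rightarrow> (nat \<Rightarrow> bool) \<Rightarrow> real" where
  "wsum n z b = (\<Sum>i<n. of_bool (b i) * z i)"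

lemma prob_bsum:
  "measure_pmf.prob (bsum n p z) {x. P x} = measure_pmf.prob (bern_vec n p) {b. P (wsum n z b)}"
  by (simp add: bsum_def wsum_def vimage_def)

lemma finite_set_pmf_bern_vec: "finite (set_pmf (bern_vec n p))"
  unfolding bern_vec_def by (simp add: finite_set_pmf_Pi_pmf)

definition round_dist :: "nat \<Rightarrow> (nat \<Rightarrow> real) \<Rightarrow> (nat \<Rightarrow> bool) pmf" where
  "round_dist n y = Pi_pmf {..<n} False (\<lambda>i. bernoulli_pmf (frac (y i)))"

definition round_err :: "(nat \<Rightarrow> real) \<Rightarrow> (nat \<Rightarrow> bool) \<Rightarrow> nat \<Rightarrow> real" where
  "round_err y r i = of_bool (r i) - frac (y i)"

definition rounded :: "(nat \<Rightarrow> real) \<Rightarrow> (nat \<Rightarrow> bool) \<Rightarrow> nat \<Rightarrow> int" where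
  "rounded y r i = \<lfloor>y i\<rfloor> + of_bool (r i)"

lemma finite_set_pmf_round_dist: "finite (set_pmf (round_dist n y))"
  unfolding round_dist_def by (simp add: finite_set_pmf_Pi_pmf)

lemma of_int_rounded: "real_of_int (rounded y r i) = y i + round_err y r i"
  by (simp add: rounded_def round_err_def frac_def)

lemma abs_round_err_le_1: "\<bar>round_err y r i\<bar> \<le> 1"
  using frac_ge_0[of "y i"] frac_lt_1[of "y i"] by (auto simp: round_err_def)

lemma wsum_rounded:
  "wsum n (\<lambda>i. real_of_int (rounded y r i)) b = wsum n y b + wsum n (round_err y r) b"
  by (simp add: wsum_def of_int_rounded distrib_left sum.distrib)

lemma prob_bsum_rounded:
  "measure_pmf.prob (bsum n p (\<lambda>i. real_of_int (rounded y r i))) {x. P x}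
     = measure_pmf.prob (bern_vec n p) {b. P (wsum n y b + wsum n (round_err y r) b)}"
  by (simp add: prob_bsum wsum_rounded)

lemma prob_round_err_sum_ge:
  assumes c: "\<And>i. \<bar>c i\<bar> \<le> 1" and m: "0 < m"
  shows "measure_pmf.prob (round_dist n y) {r. m \<le> \<bar>\<Sum>i<n. c i * round_err y r i\<bar>} \<le> n / m^2"
proof -
  let ?U = "\<lambda>r. \<Sum>i<n. c i * round_err y r i"
  have "measure_pmf.expectation (round_dist n y) (\<lambda>r. (?U r)^2) \<le> card {..<n}"
  proof -
    have "\<bar>c i * (of_bool v - frac (y i))\<bar> \<le> 1" for i v
      using abs_round_err_le_1[of y "\<lambda>_. v" i] c[of i]
      by (simp add: round_err_def abs_mult mult_le_one)
    moreover have "measure_pmf.expectation (bernoulli_pmf (frac (y i))) (\<lambda>v. c i * (of_bool v - frac (y i))) = 0" for i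
      using frac_ge_0[of "y i"] frac_lt_1[of "y i"] by simp
    ultimately show ?thesis
      using second_moment_sum_Pi_pmf[of "{..<n}" "\<lambda>i. bernoulli_pmf (frac (y i))"
          "\<lambda>i v. c i * (of_bool v - frac (y i))" False]
      by (simp add: round_dist_def round_err_def)
  qed
  moreover have "{r. m \<le> \<bar>?U r\<bar>} = {r. m^2 \<le> (?U r)^2}"
    using m by (auto simp: abs_le_square_iff[symmetric])
  ultimately show ?thesis
    using Markov_inequality_pmf[OF finite_set_pmf_round_dist, of "\<lambda>r. (?U r)^2" "m^2" n y] m
    by (simp add: divide_right_mono order_trans)
qed

lemma expectation_prob_round_err_ge:
  assumes m: "\<And>b. 0 < m b"
  shows "measure_pmf.expectation (round_dist n y)
           (\<lambda>r. measure_pmf.prob (bern_vec n p) {b. P b \<and> m b \<le> \<bar>wsum n (round_err y r) b\<bar>})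
         \<le> measure_pmf.expectation (bern_vec n p) (\<lambda>b. of_bool (P b) * (n / (m b)^2))"
proof -
  have "measure_pmf.expectation (round_dist n y)
           (\<lambda>r. measure_pmf.prob (bern_vec n p) {b. P b \<and> m b \<le> \<bar>wsum n (round_err y r) b\<bar>})
      = measure_pmf.expectation (bern_vec n p)
           (\<lambda>b. measure_pmf.prob (round_dist n y) {r. P b \<and> m b \<le> \<bar>wsum n (round_err y r) b\<bar>})"
    unfolding prob_eq_expectation_of_bool
    by (rule expectation_swap[OF finite_set_pmf_round_dist finite_set_pmf_bern_vec])
  also have "\<dots> \<le> measure_pmf.expectation (bern_vec n p) (\<lambda>b. of_bool (P b) * (n / (m b)^2))"
  proof (intro integral_mono)
    fix b
    show "measure_pmf.prob (round_dist n y) {r. P b \<and> m b \<le> \<bar>wsum n (round_err y r) b\<bar>}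
        \<le> of_bool (P b) * (n / (m b)^2)"
      using prob_round_err_sum_ge[of "\<lambda>i. of_bool (b i)" "m b" n y] m[of b]
      by (cases "P b") (simp_all add: wsum_def)
  qed (simp_all add: integrable_measure_pmf_finite finite_set_pmf_bern_vec)
  finally show ?thesis .
qed

lemma prob_ball_perturbed_le:
  fixes S D :: "'a \<Rightarrow> real"
  assumes "s \<le> t"
  shows "measure_pmf.prob M {b. \<bar>S b + D b - lam\<bar> \<le> t}
    \<le> measure_pmf.prob M {b. \<bar>S b - lam\<bar> \<le> 2 * t}
      + measure_pmf.prob M {b. \<bar>S b - lam\<bar> \<le> 2 * \<bar>D b\<bar> \<and> s < \<bar>D b\<bar>}"
proof -
  have "measure_pmf.prob M {b. \<bar>S b + D b - lam\<bar> \<le> t}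
      \<le> measure_pmf.prob M ({b. \<bar>S b - lam\<bar> \<le> 2 * t} \<union> {b. \<bar>S b - lam\<bar> \<le> 2 * \<bar>D b\<bar> \<and> s < \<bar>D b\<bar>})"
    using assms by (intro measure_pmf.finite_measure_mono) auto
  then show ?thesis using prob_Un_le order_trans by blast
qed

lemma prob_ball_le_perturbed:
  fixes S D :: "'a \<Rightarrow> real"
  shows "measure_pmf.prob M {b. \<bar>S b - mu\<bar> \<le> s}
    \<le> measure_pmf.prob M {b. \<bar>S b + D b - mu\<bar> \<le> 3 * s}
      + measure_pmf.prob M {b. \<bar>S b - mu\<bar> \<le> s \<and> 2 * s \<le> \<bar>D b\<bar>}"
proof -
  have "measure_pmf.prob M {b. \<bar>S b - mu\<bar> \<le> s}
      \<le> measure_pmf.prob M ({b. \<bar>S b + D b - mu\<bar> \<le> 3 * s} \<union> {b. \<bar>S b - mu\<bar> \<le> s \<and> 2 * s \<le> \<bar>D b\<bar>})"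
    by (intro measure_pmf.finite_measure_mono) auto
  then show ?thesis using prob_Un_le order_trans by blast
qed

lemma prob_rounding_spoils_small_ball:
  assumes n: "0 < n" and L: "0 < L"
    and small_ball: "\<And>t. sqrt n \<le> t \<Longrightarrow> measure_pmf.prob (bern_vec n p) {b. \<bar>wsum n y b - lam\<bar> \<le> t} \<le> L * t"
  shows "measure_pmf.prob (round_dist n y) {r. 64 * L * sqrt n \<le> measure_pmf.prob (bern_vec n p)
           {b. \<bar>wsum n y b - lam\<bar> \<le> 2 * \<bar>wsum n (round_err y r) b\<bar> \<and> sqrt n < \<bar>wsum n (round_err y r) b\<bar>}}
         \<le> 1/4"
proof -
  let ?s = "sqrt n"
  have s: "0 < ?s" using n by simp
  let ?m = "\<lambda>b. max ?s (\<bar>wsum n y b - lam\<bar> / 2)"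
  let ?Q = "\<lambda>r. measure_pmf.prob (bern_vec n p)
           {b. \<bar>wsum n y b - lam\<bar> \<le> 2 * \<bar>wsum n (round_err y r) b\<bar> \<and> ?s < \<bar>wsum n (round_err y r) b\<bar>}"
  have "measure_pmf.expectation (round_dist n y) ?Q
      \<le> measure_pmf.expectation (round_dist n y)
           (\<lambda>r. measure_pmf.prob (bern_vec n p) {b. True \<and> ?m b \<le> \<bar>wsum n (round_err y r) b\<bar>})"
    by (intro integral_mono measure_pmf.finite_measure_mono)
      (auto simp: integrable_measure_pmf_finite finite_set_pmf_round_dist)
  also have "\<dots> \<le> measure_pmf.expectation (bern_vec n p) (\<lambda>b. of_bool True * (n / (?m b)^2))"
    by (rule expectation_prob_round_err_ge) (use s in \<open>simp add: less_max_iff_disj\<close>)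
  also have "\<dots> = measure_pmf.expectation (bern_vec n p) (\<lambda>b. (?s / ?m b)^2)"
    by (simp add: power_divide)
  also have "\<dots> \<le> 16 * L * ?s"
    using small_ball s by (intro expectation_inverse_square_le finite_set_pmf_bern_vec)
  finally have "measure_pmf.expectation (round_dist n y) ?Q / (64 * L * ?s) \<le> 1/4"
    using L s by (simp add: pos_divide_le_eq)
  moreover have "measure_pmf.prob (round_dist n y) {r. 64 * L * ?s \<le> ?Q r}
      \<le> measure_pmf.expectation (round_dist n y) ?Q / (64 * L * ?s)"
    using L s by (intro Markov_inequality_pmf finite_set_pmf_round_dist) auto
  ultimately show ?thesis by linarith
qed

lemma prob_rounding_leaves_ball:
  assumes n: "0 < n"
    and A: "0 < measure_pmf.prob (bern_vec n p) {b. \<bar>wsum n y b - mu\<bar> \<le> sqrt n}"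
  shows "measure_pmf.prob (round_dist n y)
           {r. measure_pmf.prob (bern_vec n p) {b. \<bar>wsum n y b - mu\<bar> \<le> sqrt n} / 2 \<le>
               measure_pmf.prob (bern_vec n p)
                 {b. \<bar>wsum n y b - mu\<bar> \<le> sqrt n \<and> 2 * sqrt n \<le> \<bar>wsum n (round_err y r) b\<bar>}}
         \<le> 1/2"
proof -
  let ?s = "sqrt n"
  let ?A = "measure_pmf.prob (bern_vec n p) {b. \<bar>wsum n y b - mu\<bar> \<le> ?s}"
  let ?Z = "\<lambda>r. measure_pmf.prob (bern_vec n p)
                 {b. \<bar>wsum n y b - mu\<bar> \<le> ?s \<and> 2 * ?s \<le> \<bar>wsum n (round_err y r) b\<bar>}"
  have "measure_pmf.expectation (round_dist n y) ?Z
      \<le> measure_pmf.expectation (bern_vec n p) (\<lambda>b. of_bool (\<bar>wsum n y b - mu\<bar> \<le> ?s) * (n / (2 * ?s)^2))"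
    using n by (intro expectation_prob_round_err_ge) simp
  also have "\<dots> = ?A / 4"
  proof -
    have "n / (2 * ?s)^2 = 1/4" using n by (simp add: power_mult_distrib)
    then show ?thesis by (simp add: prob_eq_expectation_of_bool)
  qed
  finally have "measure_pmf.expectation (round_dist n y) ?Z / (?A / 2) \<le> 1/2"
    using A by (simp add: pos_divide_le_eq)
  moreover have "measure_pmf.prob (round_dist n y) {r. ?A / 2 \<le> ?Z r}
      \<le> measure_pmf.expectation (round_dist n y) ?Z / (?A / 2)"
    using A by (intro Markov_inequality_pmf finite_set_pmf_round_dist) auto
  ultimately show ?thesis by linarith
qed

lemma exists_good_rounding:
  assumes n: "0 < n" and L: "0 < L"
    and small_ball: "\<And>t. sqrt n \<le> t \<Longrightarrow> measure_pmf.prob (bern_vec n p) {b. \<bar>wsum n y b - lam\<bar> \<le> t} \<le> L * t"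
    and A: "0 < measure_pmf.prob (bern_vec n p) {b. \<bar>wsum n y b - mu\<bar> \<le> sqrt n}"
  obtains r where
    "measure_pmf.prob (bern_vec n p) {b. \<bar>wsum n y b - lam\<bar> \<le> 2 * \<bar>wsum n (round_err y r) b\<bar>
        \<and> sqrt n < \<bar>wsum n (round_err y r) b\<bar>} < 64 * L * sqrt n"
    "measure_pmf.prob (bern_vec n p) {b. \<bar>wsum n y b - mu\<bar> \<le> sqrt n \<and> 2 * sqrt n \<le> \<bar>wsum n (round_err y r) b\<bar>}
        < measure_pmf.prob (bern_vec n p) {b. \<bar>wsum n y b - mu\<bar> \<le> sqrt n} / 2"
    "\<bar>\<Sum>i<n. round_err y r i\<bar> < 4 * sqrt n"
proof -
  let ?M = "round_dist n y"
  let ?spoil = "{r. 64 * L * sqrt n \<le> measure_pmf.prob (bern_vec n p) {b. \<bar>wsum n y b - lam\<bar>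
        \<le> 2 * \<bar>wsum n (round_err y r) b\<bar> \<and> sqrt n < \<bar>wsum n (round_err y r) b\<bar>}}"
  let ?leave = "{r. measure_pmf.prob (bern_vec n p) {b. \<bar>wsum n y b - mu\<bar> \<le> sqrt n} / 2 \<le>
        measure_pmf.prob (bern_vec n p) {b. \<bar>wsum n y b - mu\<bar> \<le> sqrt n \<and> 2 * sqrt n \<le> \<bar>wsum n (round_err y r) b\<bar>}}"
  let ?drift = "{r. 4 * sqrt n \<le> \<bar>\<Sum>i<n. 1 * round_err y r i\<bar>}"
  have "measure_pmf.prob ?M ?drift \<le> n / (4 * sqrt n)^2"
    using n by (intro prob_round_err_sum_ge) auto
  also have "\<dots> = 1/16"
    using n by (simp add: power_mult_distrib)
  finally have "measure_pmf.prob ?M ?drift \<le> 1/16" .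
  moreover have "measure_pmf.prob ?M ?spoil \<le> 1/4"
    using n L small_ball by (rule prob_rounding_spoils_small_ball)
  moreover have "measure_pmf.prob ?M ?leave \<le> 1/2"
    using n A by (rule prob_rounding_leaves_ball)
  moreover have "measure_pmf.prob ?M (?spoil \<union> ?leave \<union> ?drift)
      \<le> measure_pmf.prob ?M ?spoil + measure_pmf.prob ?M ?leave + measure_pmf.prob ?M ?drift"
    using prob_Un_le[of ?M "?spoil \<union> ?leave" ?drift] prob_Un_le[of ?M ?spoil ?leave] by linarith
  ultimately obtain r where "r \<notin> ?spoil \<union> ?leave \<union> ?drift"
    using ex_not_in_of_prob_less_1[of ?M "?spoil \<union> ?leave \<union> ?drift"] by fastforce
  then show thesis
    by (auto intro: that[of r])
qed

lemma small_ball_bsum_rounded: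
  assumes L: "0 < L" and t: "sqrt n \<le> t"
    and small_ball: "\<forall>t\<ge>sqrt n. measure_pmf.prob (bsum n p y) {x. \<bar>x - lam\<bar> \<le> t} \<le> L * t"
    and spoil: "measure_pmf.prob (bern_vec n p) {b. \<bar>wsum n y b - lam\<bar> \<le> 2 * \<bar>wsum n (round_err y r) b\<bar>
        \<and> sqrt n < \<bar>wsum n (round_err y r) b\<bar>} < 64 * L * sqrt n"
  shows "measure_pmf.prob (bsum n p (\<lambda>i. real_of_int (rounded y r i))) {x. \<bar>x - lam\<bar> \<le> t} \<le> 66 * L * t"
proof -
  have "sqrt n \<le> 2 * t" using t by (smt (verit) real_sqrt_ge_zero of_nat_0_le_iff)
  then have "measure_pmf.prob (bern_vec n p) {b. \<bar>wsum n y b - lam\<bar> \<le> 2 * t} \<le> L * (2 * t)"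
    using small_ball by (simp add: prob_bsum)
  moreover have "64 * L * sqrt n \<le> 64 * L * t"
    using L t by simp
  moreover have "measure_pmf.prob (bern_vec n p) {b. \<bar>wsum n y b + wsum n (round_err y r) b - lam\<bar> \<le> t}
      \<le> measure_pmf.prob (bern_vec n p) {b. \<bar>wsum n y b - lam\<bar> \<le> 2 * t}
        + measure_pmf.prob (bern_vec n p) {b. \<bar>wsum n y b - lam\<bar> \<le> 2 * \<bar>wsum n (round_err y r) b\<bar>
            \<and> sqrt n < \<bar>wsum n (round_err y r) b\<bar>}"
    by (rule prob_ball_perturbed_le[OF t])
  ultimately show ?thesis
    using spoil by (simp add: prob_bsum_rounded)
qed

lemma levy_conc_bsum_rounded_ge:
  assumes A: "levy_conc (bsum n p y) (sqrt n) / 2 < measure_pmf.prob (bern_vec n p) {b. \<bar>wsum n y b - mu\<bar> \<le> sqrt n}"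
    and leave: "measure_pmf.prob (bern_vec n p)
        {b. \<bar>wsum n y b - mu\<bar> \<le> sqrt n \<and> 2 * sqrt n \<le> \<bar>wsum n (round_err y r) b\<bar>}
      < measure_pmf.prob (bern_vec n p) {b. \<bar>wsum n y b - mu\<bar> \<le> sqrt n} / 2"
  shows "1/12 * levy_conc (bsum n p y) (sqrt n) \<le> levy_conc (bsum n p (\<lambda>i. real_of_int (rounded y r i))) (sqrt n)"
proof -
  let ?s = "sqrt n" and ?Mb = "bern_vec n p" and ?y' = "\<lambda>i. real_of_int (rounded y r i)"
  let ?A = "measure_pmf.prob ?Mb {b. \<bar>wsum n y b - mu\<bar> \<le> ?s}"
  have "?A \<le> measure_pmf.prob ?Mb {b. \<bar>wsum n y b + wsum n (round_err y r) b - mu\<bar> \<le> 3 * ?s}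
      + measure_pmf.prob ?Mb {b. \<bar>wsum n y b - mu\<bar> \<le> ?s \<and> 2 * ?s \<le> \<bar>wsum n (round_err y r) b\<bar>}"
    by (rule prob_ball_le_perturbed)
  also have "\<dots> \<le> measure_pmf.prob (bsum n p ?y') {x. \<bar>x - mu\<bar> \<le> 3 * ?s} + ?A / 2"
    using leave by (simp add: prob_bsum_rounded)
  also have "\<dots> \<le> 3 * levy_conc (bsum n p ?y') ?s + ?A / 2"
    by (simp add: prob_ball_triple_le_levy_conc)
  finally show ?thesis
    using A by simp
qed

lemma abs_sum_diff_rounded:
  "\<bar>(\<Sum>i<n. y i) - (\<Sum>i<n. real_of_int (rounded y r i))\<bar> = \<bar>\<Sum>i<n. round_err y r i\<bar>"
proof -
  have "(\<Sum>i<n. y i) - (\<Sum>i<n. real_of_int (rounded y r i)) = - (\<Sum>i<n. round_err y r i)"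
    by (simp add: of_int_rounded sum.distrib)
  then show ?thesis by simp
qed

lemma exists_randomized_rounding:
  assumes n: "0 < n" and L: "0 < L"
    and small_ball: "\<forall>t\<ge>sqrt n. measure_pmf.prob (bsum n p y) {x. \<bar>x - lam\<bar> \<le> t} \<le> L * t"
  obtains r where
    "\<And>t. sqrt n \<le> t \<Longrightarrow>
       measure_pmf.prob (bsum n p (\<lambda>i. real_of_int (rounded y r i))) {x. \<bar>x - lam\<bar> \<le> t} \<le> 66 * L * t"
    "1/12 * levy_conc (bsum n p y) (sqrt n) \<le> levy_conc (bsum n p (\<lambda>i. real_of_int (rounded y r i))) (sqrt n)"
    "\<bar>(\<Sum>i<n. y i) - (\<Sum>i<n. real_of_int (rounded y r i))\<bar> \<le> 66 * sqrt n"
proof -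
  let ?Lc = "levy_conc (bsum n p y) (sqrt n)"
  obtain mu where "?Lc / 2 < measure_pmf.prob (bsum n p y) {x. \<bar>x - mu\<bar> \<le> sqrt n}"
    using ex_ball_prob_gt_half_levy_conc by (metis real_sqrt_ge_zero of_nat_0_le_iff)
  then have A: "?Lc / 2 < measure_pmf.prob (bern_vec n p) {b. \<bar>wsum n y b - mu\<bar> \<le> sqrt n}"
    by (simp add: prob_bsum)
  moreover have "0 < ?Lc" by (simp add: levy_conc_pos)
  ultimately obtain r where
    spoil: "measure_pmf.prob (bern_vec n p) {b. \<bar>wsum n y b - lam\<bar> \<le> 2 * \<bar>wsum n (round_err y r) b\<bar>
        \<and> sqrt n < \<bar>wsum n (round_err y r) b\<bar>} < 64 * L * sqrt n" and
    leave: "measure_pmf.prob (bern_vec n p)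
        {b. \<bar>wsum n y b - mu\<bar> \<le> sqrt n \<and> 2 * sqrt n \<le> \<bar>wsum n (round_err y r) b\<bar>}
      < measure_pmf.prob (bern_vec n p) {b. \<bar>wsum n y b - mu\<bar> \<le> sqrt n} / 2" and
    drift: "\<bar>\<Sum>i<n. round_err y r i\<bar> < 4 * sqrt n"
    using exists_good_rounding[OF n L, of p y lam mu] small_ball by (auto simp: prob_bsum)
  show thesis
  proof (rule that[of r])
    show "measure_pmf.prob (bsum n p (\<lambda>i. real_of_int (rounded y r i))) {x. \<bar>x - lam\<bar> \<le> t} \<le> 66 * L * t"
      if "sqrt n \<le> t" for t
      using L that small_ball spoil by (rule small_ball_bsum_rounded)
    show "1/12 * ?Lc \<le> levy_conc (bsum n p (\<lambda>i. real_of_int (rounded y r i))) (sqrt n)"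
      using A leave by (rule levy_conc_bsum_rounded_ge)
    show "\<bar>(\<Sum>i<n. y i) - (\<Sum>i<n. real_of_int (rounded y r i))\<bar> \<le> 66 * sqrt n"
      using drift by (simp add: abs_sum_diff_rounded)
  qed
qed

lemma bsum_0: "bsum 0 p z = return_pmf 0"
  by (simp add: bsum_def)

lemma exists_integer_approximation:
  assumes L: "0 < L"
    and small_ball: "\<forall>t\<ge>sqrt n. measure_pmf.prob (bsum n p y) {x. \<bar>x - lam\<bar> \<le> t} \<le> L * t"
  shows "\<exists>y'::nat \<Rightarrow> int.
          (\<forall>i<n. \<bar>y i - real_of_int (y' i)\<bar> \<le> 1) \<and>
          (\<forall>t\<ge>sqrt n. measure_pmf.prob (bsum n p (\<lambda>i. real_of_int (y' i))) {x. \<bar>x - lam\<bar> \<le> t} \<le> 66 * L * t) \<and>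
          1/12 * levy_conc (bsum n p y) (sqrt n) \<le> levy_conc (bsum n p (\<lambda>i. real_of_int (y' i))) (sqrt n) \<and>
          \<bar>(\<Sum>i<n. y i) - (\<Sum>i<n. real_of_int (y' i))\<bar> \<le> 66 * sqrt n"
proof (cases "n = 0")
  case True
  have "L * t \<le> 66 * L * t" if "0 \<le> t" for t
    using L that by simp
  moreover have "0 \<le> levy_conc (return_pmf 0) 0"
    using levy_conc_pos[of 0 "return_pmf 0"] by simp
  ultimately show ?thesis
    using True small_ball by (intro exI[of _ "\<lambda>_. 0"]) (auto simp: bsum_0 intro: order_trans)
next
  case False
  then obtain r where "\<And>t. sqrt n \<le> t \<Longrightarrow>
      measure_pmf.prob (bsum n p (\<lambda>i. real_of_int (rounded y r i))) {x. \<bar>x - lam\<bar> \<le> t} \<le> 66 * L * t"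
    "1/12 * levy_conc (bsum n p y) (sqrt n) \<le> levy_conc (bsum n p (\<lambda>i. real_of_int (rounded y r i))) (sqrt n)"
    "\<bar>(\<Sum>i<n. y i) - (\<Sum>i<n. real_of_int (rounded y r i))\<bar> \<le> 66 * sqrt n"
    using exists_randomized_rounding L small_ball by blast
  then show ?thesis
    using abs_round_err_le_1 by (intro exI[of _ "rounded y r"]) (simp add: of_int_rounded)
qed

theorem lemma5p2:
  shows "\<exists>C c :: real. C > 0 \<and> c > 0 \<and>
    (\<forall>(n::nat) (p::real) (y::nat \<Rightarrow> real) (L::real) (lam::real).
       0 < p \<and> p \<le> 1/2 \<and> L > 0 \<and>
       (\<forall>t\<ge>sqrt (real n). measure_pmf.prob (bsum n p y) {x. \<bar>x - lam\<bar> \<le> t} \<le> L * t)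
       \<longrightarrow>
       (\<exists>y'::nat \<Rightarrow> int.
          (\<forall>i<n. \<bar>y i - real_of_int (y' i)\<bar> \<le> 1) \<and>
          (\<forall>t\<ge>sqrt (real n).
             measure_pmf.prob (bsum n p (\<lambda>i. real_of_int (y' i))) {x. \<bar>x - lam\<bar> \<le> t} \<le> C * L * t) \<and>
          levy_conc (bsum n p (\<lambda>i. real_of_int (y' i))) (sqrt (real n))
            \<ge> c * levy_conc (bsum n p y) (sqrt (real n)) \<and>
          \<bar>(\<Sum>i<n. y i) - (\<Sum>i<n. real_of_int (y' i))\<bar> \<le> C * sqrt (real n)))"
  by (rule exI[of _ 66], rule exI[of _ "1/12"], intro conjI allI impI)
    (simp, simp, blast intro: exists_integer_approximation)

end
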